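(* Let $G$ be a simple graph with vertices $x,y,z\in V(G)$ such that $\{x,y\},\{y,z\}\in E(G)$, $\{x,z\}\notin E(G)$, $\deg_G(y)=2$ and $\deg_G(z)=1$. If $A$ is an independent set of $G$ such that $N_G(A)$ is a vertex cover of $G$, then $A\cap\{x,y,z\}\neq\emptyset$.
   Context: $N_G(A)$ denotes the set of vertices of $G$ adjacent to at least one vertex of $A$. A vertex cover is a set of vertices meeting every edge. *)

theory Defs
  imports Main
begin

definition simple_graph :: "'a set \<Rightarrow> 'a set set \<Rightarrow> bool" where
  "simple_graph V E \<longleftrightarrow> finite V \<and> (\<forall>e\<in>E. e \<subseteq> V \<and> card e = 2)"

definition degree :: "'a set set \<Rightarrow> 'a \<Rightarrow> nat" where
  "degree E v = card {e\<in>E. v \<in> e}"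

definition independent_set :: "'a set \<Rightarrow> 'a set set \<Rightarrow> 'a set \<Rightarrow> bool" where
  "independent_set V E A \<longleftrightarrow> A \<subseteq> V \<and> (\<forall>u\<in>A. \<forall>v\<in>A. {u, v} \<notin> E)"

definition nbhd :: "'a set \<Rightarrow> 'a set set \<Rightarrow> 'a set \<Rightarrow> 'a set" where
  "nbhd V E A = {v\<in>V. \<exists>a\<in>A. {a, v} \<in> E}"

definition vertex_cover :: "'a set \<Rightarrow> 'a set set \<Rightarrow> 'a set \<Rightarrow> bool" where
  "vertex_cover V E C \<longleftrightarrow> C \<subseteq> V \<and> (\<forall>e\<in>E. e \<inter> C \<noteq> {})"

end

theory Submission
  imports Defs
begin

text \<open>The edge \<open>{y, z}\<close> must be covered by \<open>N(A)\<close>, so some vertex of \<open>A\<close> is a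
  neighbour of \<open>y\<close> or of \<open>z\<close>. The degree conditions say that these neighbours are
  exactly \<open>x, z\<close> and \<open>y\<close>.\<close>

lemma simple_graph_edge_neq:
  assumes "simple_graph V E" and "{u, v} \<in> E"
  shows "u \<noteq> v"
  using assms unfolding simple_graph_def by fastforce

lemma simple_graph_finite_edges:
  assumes "simple_graph V E"
  shows "finite E"
proof -
  have "E \<subseteq> Pow V" and "finite V"
    using assms unfolding simple_graph_def by auto
  then show ?thesis
    using finite_subset by blast
qed

lemma neighbour_mem_if_degree_eq_card:
  assumes G: "simple_graph V E"
    and deg: "degree E v = card S"
    and S_nbrs: "\<And>s. s \<in> S \<Longrightarrow> {v, s} \<in> E"
    and "{v, a} \<in> E"
  shows "a \<in> S"
proof -
  let ?edges = "{e \<in> E. v \<in> e}"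
  have "finite ?edges"
    using simple_graph_finite_edges[OF G] by simp
  have v_notin: "v \<notin> S"
    using S_nbrs simple_graph_edge_neq[OF G] by blast
  have "inj_on (\<lambda>s. {v, s}) S"
    using v_notin by (auto intro!: inj_onI simp: doubleton_eq_iff)
  then have "card ((\<lambda>s. {v, s}) ` S) = card ?edges"
    using deg card_image unfolding degree_def by metis
  moreover have "(\<lambda>s. {v, s}) ` S \<subseteq> ?edges"
    using S_nbrs by auto
  ultimately have "?edges = (\<lambda>s. {v, s}) ` S"
    using card_subset_eq[OF \<open>finite ?edges\<close>] by metis
  then obtain s where "s \<in> S" and "{v, a} = {v, s}"
    using \<open>{v, a} \<in> E\<close> by auto
  moreover have "a \<noteq> v"
    using simple_graph_edge_neq[OF G \<open>{v, a} \<in> E\<close>] by blast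
  ultimately show ?thesis
    by (auto simp: doubleton_eq_iff)
qed

lemma vertex_cover_nbhd_edge:
  assumes "vertex_cover V E (nbhd V E A)" and "{u, v} \<in> E"
  shows "\<exists>a\<in>A. {u, a} \<in> E \<or> {v, a} \<in> E"
  using assms unfolding vertex_cover_def nbhd_def by (auto simp: insert_commute)

theorem lemma3p4:
  fixes V :: "'a set" and E :: "'a set set" and x y z :: 'a and A :: "'a set"
  assumes "simple_graph V E"
    and "x \<in> V" and "y \<in> V" and "z \<in> V" and "x \<noteq> z"
    and "{x, y} \<in> E" and "{y, z} \<in> E" and "{x, z} \<notin> E"
    and "degree E y = 2" and "degree E z = 1"
    and "independent_set V E A"
    and "vertex_cover V E (nbhd V E A)"
  shows "A \<inter> {x, y, z} \<noteq> {}"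
proof -
  obtain a where "a \<in> A" and a_adj: "{y, a} \<in> E \<or> {z, a} \<in> E"
    using vertex_cover_nbhd_edge[OF assms(12,7)] by blast
  have "a \<in> {x, z} \<or> a \<in> {y}"
    using a_adj
  proof
    assume "{y, a} \<in> E"
    moreover have "degree E y = card {x, z}"
      using assms(5,9) by simp
    moreover have "{y, s} \<in> E" if "s \<in> {x, z}" for s
      using that assms(6,7) by (auto simp: insert_commute)
    ultimately show ?thesis
      using neighbour_mem_if_degree_eq_card[OF assms(1)] by blast
  next
    assume "{z, a} \<in> E"
    moreover have "degree E z = card {y}" and "{z, y} \<in> E"
      using assms(7,10) by (auto simp: insert_commute)
    ultimately show ?thesis
      using neighbour_mem_if_degree_eq_card[OF assms(1)] by blast
  qed
  then show ?thesis
    using \<open>a \<in> A\<close> by blast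
qed

end
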